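(* Let $\mathcal A$ be a full adjunction implicative ordered combinatory algebra with underlying complete lattice $(A,\le)$, and let $\mathcal K_{\mathcal A\bullet}$ be the associated abstract Krivine structure ($\Lambda=\Pi=A$, $s\perp\pi\iff s\le\pi$, $\mathrm{push}(s,\pi)=s\to\pi$). Write $A_\Pi$, $A_\Lambda$ for $A$ viewed as $\Pi$, resp. $\Lambda$, ${\uparrow}a=\{x:a\le x\}$, ${\downarrow}a=\{x:x\le a\}$, and let $\bot,\top$ be the least and greatest elements of $A$. Then: (1) for $C\subseteq A_\Pi$, ${}^\perp C={\downarrow}(\inf C)$; for $C\subseteq A_\Lambda$, $C^\perp={\uparrow}(\sup C)$; (2) for $a\in A_\Pi$: ${}^\perp({\uparrow}a)={\downarrow}a$, ${}^\perp({\downarrow}a)=\{\bot\}$, ${}^\perp\{a\}={\downarrow}a$, $({}^\perp\{a\})^\perp={\uparrow}a$, $\overline{{\uparrow}a}={\uparrow}a$, $\widehat{{\uparrow}a}={\uparrow}a$; for $a\in A_\Lambda$: $({\downarrow}a)^\perp={\uparrow}a$, $({\uparrow}a)^\perp=\{\top\}$, $\{a\}^\perp={\uparrow}a$, ${}^\perp(\{a\}^\perp)={\downarrow}a$, and the closure of ${\downarrow}a$ on the term side, ${}^\perp(({\downarrow}a)^\perp)$, equals ${\downarrow}a$; (3) for $D\subseteq A_\Pi$: $\overline D={\uparrow}(\inf D)$ and $\widehat D=\bigcup_{c\in D}{\uparrow}c$; hence $\mathcal P_\perp(A_\Pi)$ is the set of principal filters of $A$, $\mathcal P_\bullet(A_\Pi)$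 is the set of unions of principal filters of $A$, and $\inf D=\inf\widehat D=\inf\overline D$; (4) for $C,D\subseteq A_\Pi$: $(\inf C\to\inf D)\le\inf(C\to_\perp D)=\inf(C\to_\bullet D)=\inf(C\to D)$.
   Context: A full adjunction implicative ordered combinatory algebra is an inf-complete poset $(A,\le)$ with application $ab$ monotone in both arguments, implication $a\to b$ antimonotone in the first and monotone in the second argument, elements $\mathsf k,\mathsf s$ with $\mathsf k ab\le a$, $\mathsf s abc\le ac(bc)$, such that $a\le b\to c\iff ab\le c$, and a subset $\Phi\subseteq A$ closed under application containing $\mathsf s,\mathsf k$. Polars: $L^\perp=\{\pi:\forall t\in L,\ t\perp\pi\}$, ${}^\perp P=\{t:\forall\pi\in P,\ t\perp\pi\}$; $\overline P=({}^\perp P)^\perp$; $\widehat P=\bigcup_{\pi\in P}\overline{\{\pi\}}$; $\mathcal P_\perp(\Pi)=\{P:\overline P=P\}$, $\mathcal P_\bullet(\Pi)=\{P:\widehat P=P\}$. For $C,D\subseteq\Pi$: $C\to D=\{t\cdot\pi:t\in{}^\perp C,\pi\in D\}$, $C\to_\bullet D=\widehat{C\to D}$, $C\to_\perp D=\overline{C\to D}$, where $t\cdot\pi=t\to\pi$. *)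

theory Defs
  imports Main
begin

text \<open>Full adjunction implicative ordered combinatory algebra on a complete lattice
  (an inf-complete poset is a complete lattice).\<close>
definition full_adj_ioca ::
  "('a::complete_lattice \<Rightarrow> 'a \<Rightarrow> 'a) \<Rightarrow> ('a \<Rightarrow> 'a \<Rightarrow> 'a) \<Rightarrow> 'a \<Rightarrow> 'a \<Rightarrow> 'a set \<Rightarrow> bool" where
  "full_adj_ioca app imp k s Phi \<longleftrightarrow>
     (\<forall>a a' b b'. a \<le> a' \<and> b \<le> b' \<longrightarrow> app a b \<le> app a' b') \<and>
     (\<forall>a a' b b'. a' \<le> a \<and> b \<le> b' \<longrightarrow> imp a b \<le> imp a' b') \<and>
     (\<forall>a b. app (app k a) b \<le> a) \<and>
     (\<forall>a b c. app (app (app s a) b) c \<le> app (app a c) (app b c)) \<and>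
     (\<forall>a b c. a \<le> imp b c \<longleftrightarrow> app a b \<le> c) \<and>
     (\<forall>a\<in>Phi. \<forall>b\<in>Phi. app a b \<in> Phi) \<and> k \<in> Phi \<and> s \<in> Phi"

text \<open>Associated abstract Krivine structure: Lambda = Pi = A, t \<bottom> pi iff t \<le> pi,
  push(t,pi) = t \<rightarrow> pi.\<close>

definition lperp :: "'a::complete_lattice set \<Rightarrow> 'a set" where
  "lperp P = {t. \<forall>\<pi>\<in>P. t \<le> \<pi>}"

definition rperp :: "'a::complete_lattice set \<Rightarrow> 'a set" where
  "rperp L = {\<pi>. \<forall>t\<in>L. t \<le> \<pi>}"

definition pclos :: "'a::complete_lattice set \<Rightarrow> 'a set" where
  "pclos P = rperp (lperp P)"

definition phat :: "'a::complete_lattice set \<Rightarrow> 'a set" where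
  "phat P = (\<Union>\<pi>\<in>P. pclos {\<pi>})"

definition P_perp :: "'a::complete_lattice set set" where
  "P_perp = {P. pclos P = P}"

definition P_bullet :: "'a::complete_lattice set set" where
  "P_bullet = {P. phat P = P}"

definition karrow :: "('a::complete_lattice \<Rightarrow> 'a \<Rightarrow> 'a) \<Rightarrow> 'a set \<Rightarrow> 'a set \<Rightarrow> 'a set" where
  "karrow imp C D = {imp t \<pi> | t \<pi>. t \<in> lperp C \<and> \<pi> \<in> D}"

definition karrow_bullet :: "('a::complete_lattice \<Rightarrow> 'a \<Rightarrow> 'a) \<Rightarrow> 'a set \<Rightarrow> 'a set \<Rightarrow> 'a set" where
  "karrow_bullet imp C D = phat (karrow imp C D)"

definition karrow_perp :: "('a::complete_lattice \<Rightarrow> 'a \<Rightarrow> 'a) \<Rightarrow> 'a set \<Rightarrow> 'a set \<Rightarrow> 'a set" where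
  "karrow_perp imp C D = pclos (karrow imp C D)"

end

theory Submission
  imports Defs
begin

text \<open>Since orthogonality is the order relation itself, every orthogonal of a set is a
  principal ideal or filter: \<open>t \<le> \<pi>\<close> for all \<open>\<pi> \<in> C\<close> iff \<open>t \<le> Inf C\<close>, and dually. All
  claims then reduce to computations with intervals in a complete lattice; for the
  Krivine arrow, monotonicity of implication gives \<open>Inf C \<rightarrow> Inf D \<le> t \<rightarrow> \<pi>\<close>.\<close>

lemma lperp_eq_atMost: "lperp C = {..Inf C}"
  unfolding lperp_def by (auto intro: Inf_greatest order_trans[OF _ Inf_lower])

lemma rperp_eq_atLeast: "rperp L = {Sup L..}"
  unfolding rperp_def by (auto intro: Sup_least order_trans[OF Sup_upper])

lemma pclos_eq_atLeast: "pclos D = {Inf D..}"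
  unfolding pclos_def lperp_eq_atMost rperp_eq_atLeast by simp

lemma phat_eq_UN_atLeast: "phat D = (\<Union>c\<in>D. {c..})"
  unfolding phat_def pclos_eq_atLeast by simp

lemma lperp_atLeast: "lperp {a..} = {..a}"
  and lperp_atMost: "lperp {..a} = {bot}"
  and lperp_singleton: "lperp {a} = {..a}"
  and rperp_atMost: "rperp {..a} = {a..}"
  and rperp_atLeast: "rperp {a..} = {top}"
  and rperp_singleton: "rperp {a} = {a..}"
  by (auto simp: lperp_eq_atMost rperp_eq_atLeast bot_unique top_unique)

lemma pclos_atLeast: "pclos {a..} = {a..}"
  by (simp add: pclos_eq_atLeast)

lemma UN_atLeast_upward_closed:
  fixes X :: "'b::order set"
  shows "(\<Union>c\<in>(\<Union>x\<in>X. {x..}). {c..}) = (\<Union>x\<in>X. {x..})"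
  by (auto intro: order_trans)

lemma phat_atLeast: "phat {a..} = {a..}"
  unfolding phat_eq_UN_atLeast by (auto intro: order_trans)

lemma P_perp_eq_principal_filters: "P_perp = range (\<lambda>a. {a..})"
proof (intro set_eqI iffI)
  fix P :: "'a set"
  assume "P \<in> P_perp"
  then have "P = {Inf P..}" by (simp add: P_perp_def pclos_eq_atLeast)
  then show "P \<in> range (\<lambda>a. {a..})" by blast
qed (auto simp: P_perp_def pclos_atLeast)

lemma P_bullet_eq_unions_of_principal_filters: "P_bullet = {(\<Union>c\<in>X. {c..}) | X. True}"
proof (intro set_eqI iffI)
  fix P :: "'a set"
  assume "P \<in> P_bullet"
  then have "P = (\<Union>c\<in>P. {c..})" by (simp add: P_bullet_def phat_eq_UN_atLeast)
  then show "P \<in> {(\<Union>c\<in>X. {c..}) | X. True}" by blast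
next
  fix P :: "'a set"
  assume "P \<in> {(\<Union>c\<in>X. {c..}) | X. True}"
  then obtain X where "P = (\<Union>c\<in>X. {c..})" by blast
  then show "P \<in> P_bullet"
    by (simp only: P_bullet_def phat_eq_UN_atLeast UN_atLeast_upward_closed mem_Collect_eq)
qed

lemma Inf_phat: "Inf (phat D) = Inf D"
  unfolding phat_eq_UN_atLeast
proof (rule antisym)
  show "Inf (\<Union>c\<in>D. {c..}) \<le> Inf D"
    by (rule Inf_superset_mono) auto
  show "Inf D \<le> Inf (\<Union>c\<in>D. {c..})"
    by (rule Inf_greatest) (auto intro: order_trans[OF Inf_lower])
qed

lemma Inf_pclos: "Inf (pclos D) = Inf D"
  by (simp add: pclos_eq_atLeast)

lemma Inf_karrow_perp: "Inf (karrow_perp imp C D) = Inf (karrow imp C D)"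
  by (simp add: karrow_perp_def Inf_pclos)

lemma Inf_karrow_bullet: "Inf (karrow_bullet imp C D) = Inf (karrow imp C D)"
  by (simp add: karrow_bullet_def Inf_phat)

lemma imp_Inf_le_Inf_karrow:
  assumes "\<And>a a' b b'. a' \<le> a \<Longrightarrow> b \<le> b' \<Longrightarrow> imp a b \<le> imp a' b'"
  shows "imp (Inf C) (Inf D) \<le> Inf (karrow imp C D)"
  unfolding karrow_def lperp_eq_atMost by (auto intro!: Inf_greatest assms Inf_lower)

lemma full_adj_ioca_imp_mono:
  assumes "full_adj_ioca app imp k s Phi" and "a' \<le> a" and "b \<le> b'"
  shows "imp a b \<le> imp a' b'"
  using assms unfolding full_adj_ioca_def by blast

theorem mainTheorem12:
  fixes app imp :: "'a::complete_lattice \<Rightarrow> 'a \<Rightarrow> 'a" and k s :: 'a and Phi :: "'a set"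
  assumes "full_adj_ioca app imp k s Phi"
  shows
    "(\<forall>C::'a set. lperp C = {..Inf C}) \<and> (\<forall>C::'a set. rperp C = {Sup C..})
   \<and> (\<forall>a::'a. lperp {a..} = {..a} \<and> lperp {..a} = {bot} \<and> lperp {a} = {..a}
          \<and> rperp (lperp {a}) = {a..} \<and> pclos {a..} = {a..} \<and> phat {a..} = {a..})
   \<and> (\<forall>a::'a. rperp {..a} = {a..} \<and> rperp {a..} = {top} \<and> rperp {a} = {a..}
          \<and> lperp (rperp {a}) = {..a} \<and> lperp (rperp {..a}) = {..a})
   \<and> (\<forall>D::'a set. pclos D = {Inf D..} \<and> phat D = (\<Union>c\<in>D. {c..}))
   \<and> (P_perp::'a set set) = range (\<lambda>a. {a..})
   \<and> (P_bullet::'a set set) = {(\<Union>c\<in>X. {c..}) | X. True}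
   \<and> (\<forall>D::'a set. Inf D = Inf (phat D) \<and> Inf D = Inf (pclos D))
   \<and> (\<forall>C D. imp (Inf C) (Inf D) \<le> Inf (karrow_perp imp C D)
          \<and> Inf (karrow_perp imp C D) = Inf (karrow_bullet imp C D)
          \<and> Inf (karrow_bullet imp C D) = Inf (karrow imp C D))"
proof (intro conjI allI)
  fix C D :: "'a set"
  show "imp (Inf C) (Inf D) \<le> Inf (karrow_perp imp C D)"
    using imp_Inf_le_Inf_karrow[of imp] full_adj_ioca_imp_mono[OF assms]
    by (simp add: Inf_karrow_perp)
  show "Inf (karrow_perp imp C D) = Inf (karrow_bullet imp C D)"
    by (simp only: Inf_karrow_perp Inf_karrow_bullet)
next
  fix a :: 'a
  show "rperp (lperp {a}) = {a..}" by (simp only: lperp_singleton rperp_atMost)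
  show "lperp (rperp {a}) = {..a}" by (simp only: rperp_singleton lperp_atLeast)
  show "lperp (rperp {..a}) = {..a}" by (simp only: rperp_atMost lperp_atLeast)
qed (rule lperp_eq_atMost rperp_eq_atLeast pclos_eq_atLeast phat_eq_UN_atLeast
    lperp_atLeast lperp_atMost lperp_singleton rperp_atMost rperp_atLeast rperp_singleton
    pclos_atLeast phat_atLeast P_perp_eq_principal_filters
    P_bullet_eq_unions_of_principal_filters Inf_phat[symmetric] Inf_pclos[symmetric]
    Inf_karrow_bullet)+

end
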